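(* Let $n\geqslant 0$, $r\geqslant 1$ and $d_1,\dots,d_r>1$ be integers, let $X_n(\underline{d})=X_n(d_1,\dots,d_r)\subset\mathbb{C}P^{n+r}$ be a complete intersection and set $c_1=n+r+1-\sum_{i=1}^r d_i$. Let $k\geqslant 2$ be an integer such that $c_1/k$ is an integer. Then: (1) $A_k(X_n(\underline{d}))=0$ if $c_1>0$, and $A_k(X_n(\underline{d}))=k^n(1+(-1)^n)$ if $c_1=0$. (2) If $c_1<0$, then $A_k(X_n(\underline{d}))\geqslant k^n\left[\binom{n+1-\frac{k-1}{k}c_1}{n+1}+(-1)^n\binom{n+1-\frac{1}{k}c_1}{n+1}\right]$.
   Context: A complete intersection $X_n(d_1,\dots,d_r)\subset\mathbb{C}P^{n+r}$ is a compact complex $n$-dimensional manifold given as the transversal intersection of $r$ nonsingular hypersurfaces of degrees $d_1,\dots,d_r$; its first Chern class is $c_1 x$ with $c_1=n+r+1-\sum_i d_i$, $x$ the pullback of the hyperplane class. For $k\geqslant2$, the $A_k$-genus of a compact almost complex $n$-manifold $M$ with formal Chern roots $x_1,\dots,x_n$ is $A_k(M)=\big(\prod_{i=1}^n\frac{k x_i e^{x_i}}{e^{kx_i}-1}\big)[M]$. Generalized binomial coefficients: $\binom{a}{m}=\frac{a(a-1)\cdots(a-m+1)}{m!}$. *)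

theory Defs
  imports "HOL-Computational_Algebra.Formal_Power_Series"
begin

text \<open>Reciprocal of the characteristic power series of the A_k-genus evaluated at d*x:
  1/Q_k(d x) = (e^{k d x} - 1)/(k d x e^{d x}),  where Q_k(x) = k x e^x/(e^{k x}-1).\<close>
definition Ak_Qinv :: "nat \<Rightarrow> real \<Rightarrow> real fps" where
  "Ak_Qinv k d = fps_const (1 / (real k * d)) * fps_shift 1 (fps_exp (real k * d) - 1)
                 * fps_exp (- d)"

definition Ak_Q :: "nat \<Rightarrow> real fps" where
  "Ak_Q k = inverse (Ak_Qinv k 1)"

text \<open>Since TX + sum_i O(d_i) = (n+r+1) O(1) (stably) and [X] is Poincare dual to
  (prod d_i) x^r, A_k(X) = (prod d_i) * coefficient of x^n in
  Q_k(x)^{n+r+1} / prod_i Q_k(d_i x).\<close>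
definition Ak_genus_CI :: "nat \<Rightarrow> nat \<Rightarrow> nat list \<Rightarrow> real" where
  "Ak_genus_CI k n ds =
     (\<Prod>d\<leftarrow>ds. real d) *
     fps_nth (Ak_Q k ^ (n + length ds + 1) * (\<Prod>d\<leftarrow>ds. Ak_Qinv k (real d))) n"

definition c1_CI :: "nat \<Rightarrow> nat list \<Rightarrow> int" where
  "c1_CI n ds = int n + int (length ds) + 1 - (\<Sum>d\<leftarrow>ds. int d)"

end

(*
  Put E(x) = (e^(kx) - 1)/x. From e^(kdx) - 1 = (e^(kx) - 1)(1 + e^(kx) + ... + e^((d-1)kx)),
  the series (prod_i d_i) Q_k(x)^(n+r+1) prod_i Q_k(d_i x)^(-1) equals
  k^(n+1) e^(c_1 x) E(x)^(-(n+1)) P(e^(kx)), where P(y) = prod_i (1 + y + ... + y^(d_i - 1)).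
  For c_1 = k m, the x^n-coefficient of k E^(-(n+1)) e^(kax) is the residue of
  k e^(kax) / (e^(kx) - 1)^(n+1), which is binom(a - 1, n): it satisfies Pascal's rule in a,
  and at a = 1 the integrand is an exact derivative. Hence A_k(X) = k^n sum_i p_i binom(m + i - 1, n),
  where the coefficients p_i of P are at least 1 and palindromic, and deg P = n + 1 - c_1.
  For c_1 > 0 every binomial vanishes; for c_1 = 0 only the two extreme terms survive; for
  c_1 = -k M the sum splits as (-1)^n F(M) + F((k-1)M) with F(J) = sum_(i<=J) p_i binom(n+J-i, n),
  and F(J) - binom(n+J+1, n+1) is nonnegative and increasing in J.
*)
theory Submission
  imports Defs "HOL-Computational_Algebra.Polynomial"
begin

unbundle fps_syntax

section \<open>Residues of exponential quotients\<close>

(* (x f)' / (x f)^(n+1) is the derivative of -(x f)^(-n) / n, so its residue vanishes. *)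
lemma fps_deriv_X_mult_times_inverse_power_nth_eq_0:
  fixes f :: "'a::field_char_0 fps"
  assumes f0: "f $ 0 \<noteq> 0" and n: "n \<ge> 1"
  shows "(fps_deriv (fps_X * f) * inverse f ^ (n + 1)) $ n = 0"
proof -
  define g where "g = inverse f"
  obtain m where m: "n = Suc m" using n by (cases n) auto
  have fg: "f * g = 1" using f0 by (simp add: g_def inverse_mult_eq_1')
  have "fps_deriv (fps_X * f) * g ^ (n + 1) = (f * g) * g ^ n + fps_X * (fps_deriv f * g ^ (n + 1))"
    by (simp add: algebra_simps)
  then have split: "fps_deriv (fps_X * f) * g ^ (n + 1) = g ^ n + fps_X * (fps_deriv f * g ^ (n + 1))"
    by (simp only: fg mult_1)
  have "fps_deriv (g ^ n) = fps_const (of_nat n) * (- fps_deriv f * g\<^sup>2) * g ^ m"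
    unfolding fps_deriv_power m diff_Suc_1 g_def fps_inverse_deriv[OF f0] ..
  also have "\<dots> = fps_const (- of_nat n) * (fps_deriv f * g ^ (n + 1))"
    using m by (simp add: power2_eq_square mult_ac fps_const_neg[symmetric] del: fps_const_neg
        of_nat_Suc)
  finally have "fps_deriv (g ^ n) $ m = - of_nat n * (fps_deriv f * g ^ (n + 1)) $ m"
    by simp
  moreover have "fps_deriv (g ^ n) $ m = of_nat n * g ^ n $ n"
    unfolding fps_deriv_nth using m by (simp only: Suc_eq_plus1)
  ultimately have "of_nat n * g ^ n $ n = - of_nat n * (fps_deriv f * g ^ (n + 1)) $ m"
    by (simp only:)
  then have "of_nat n * (g ^ n $ n + (fps_deriv f * g ^ (n + 1)) $ m) = (0 :: 'a)"
    by (simp add: distrib_left)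
  then have "g ^ n $ n + (fps_deriv f * g ^ (n + 1)) $ m = 0"
    using n by simp
  then have "(fps_deriv (fps_X * f) * g ^ (n + 1)) $ n = 0"
    unfolding split using m by simp
  then show ?thesis
    by (simp only: g_def)
qed

definition fps_expm1_quot :: "'a::field_char_0 \<Rightarrow> 'a fps" where
  "fps_expm1_quot c = fps_shift 1 (fps_exp c - 1)"

lemma fps_expm1_quot_nth_0 [simp]: "fps_expm1_quot c $ 0 = c"
  by (simp add: fps_expm1_quot_def)

lemma fps_exp_eq_1_plus_X_times_expm1_quot: "fps_exp c = 1 + fps_X * fps_expm1_quot c"
  by (rule fps_ext) (auto simp: fps_expm1_quot_def)

lemma fps_expm1_quot_times_inverse:
  "c \<noteq> 0 \<Longrightarrow> fps_expm1_quot c * inverse (fps_expm1_quot c) = 1"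
  by (simp add: inverse_mult_eq_1')

(* The residue at x = 0 of c e^(acx) / (e^(cx) - 1)^(n+1). *)
definition exp_residue :: "'a::field_char_0 \<Rightarrow> nat \<Rightarrow> int \<Rightarrow> 'a" where
  "exp_residue c n a = c * (inverse (fps_expm1_quot c) ^ (n + 1) * fps_exp (c * of_int a)) $ n"

lemma exp_residue_0: "c \<noteq> 0 \<Longrightarrow> exp_residue c 0 a = 1"
  by (simp add: exp_residue_def)

lemma exp_residue_Suc_plus_1:
  assumes "c \<noteq> 0"
  shows "exp_residue c (Suc n) (a + 1) = exp_residue c (Suc n) a + exp_residue c n a"
proof -
  define E V where "E = fps_expm1_quot c" and "V = inverse (fps_expm1_quot c)"
  have "fps_exp (c * of_int (a + 1)) = fps_exp (c * of_int a) * (1 + fps_X * E)"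
    by (simp add: E_def distrib_left fps_exp_add_mult flip: fps_exp_eq_1_plus_X_times_expm1_quot)
  then have "V ^ (Suc n + 1) * fps_exp (c * of_int (a + 1))
      = V ^ (Suc n + 1) * fps_exp (c * of_int a)
        + fps_X * (V ^ (n + 1) * fps_exp (c * of_int a)) * (E * V)"
    by (simp add: algebra_simps)
  also have "E * V = 1"
    using assms by (simp add: E_def V_def fps_expm1_quot_times_inverse)
  finally show ?thesis
    by (simp add: exp_residue_def V_def algebra_simps)
qed

lemma exp_residue_1:
  assumes "c \<noteq> 0" and "n \<ge> 1"
  shows "exp_residue c n 1 = 0"
proof -
  have "fps_X * fps_expm1_quot c = fps_exp c - 1"
    by (simp add: fps_exp_eq_1_plus_X_times_expm1_quot[of c])
  then have "fps_deriv (fps_X * fps_expm1_quot c) = fps_const c * fps_exp c"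
    by simp
  then have "exp_residue c n 1
      = (fps_deriv (fps_X * fps_expm1_quot c) * inverse (fps_expm1_quot c) ^ (n + 1)) $ n"
    unfolding exp_residue_def by (simp only: of_int_1 mult_1_left mult_1_right mult.assoc mult.commute
        fps_mult_left_const_nth)
  also have "\<dots> = 0"
    using assms by (intro fps_deriv_X_mult_times_inverse_power_nth_eq_0) simp_all
  finally show ?thesis .
qed

lemma exp_residue_eq_gchoose:
  assumes "c \<noteq> 0"
  shows "exp_residue c n a = of_int (a - 1) gchoose n"
proof (induction n arbitrary: a)
  case 0
  then show ?case using exp_residue_0[OF assms] by simp
next
  case (Suc n)
  show ?case
  proof (induction a rule: int_induct[where k = 1])
    case base
    then show ?case using exp_residue_1[OF assms, of "Suc n"] by simp
  next
    case (step1 a)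
    have "exp_residue c (Suc n) (a + 1) = exp_residue c (Suc n) a + exp_residue c n a"
      by (rule exp_residue_Suc_plus_1[OF assms])
    also have "\<dots> = (of_int (a - 1) gchoose Suc n) + (of_int (a - 1) gchoose n)"
      using step1 Suc.IH by simp
    also have "\<dots> = of_int (a + 1 - 1) gchoose Suc n"
      using gbinomial_Suc_Suc[of "of_int (a - 1) :: 'a" n] by (simp add: algebra_simps)
    finally show ?case .
  next
    case (step2 a)
    have "exp_residue c (Suc n) (a - 1) = exp_residue c (Suc n) (a - 1 + 1) - exp_residue c n (a - 1)"
      using exp_residue_Suc_plus_1[OF assms, of n "a - 1"] by simp
    also have "\<dots> = (of_int (a - 1) gchoose Suc n) - (of_int (a - 1 - 1) gchoose n)"
      using step2 Suc.IH by simp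
    also have "\<dots> = of_int (a - 1 - 1) gchoose Suc n"
      using gbinomial_Suc_Suc[of "of_int (a - 1 - 1) :: 'a" n] by (simp add: algebra_simps)
    finally show ?case .
  qed
qed

section \<open>Geometric polynomials\<close>

fun geom_poly :: "nat \<Rightarrow> 'a::comm_semiring_1 poly" where
  "geom_poly 0 = 0"
| "geom_poly (Suc d) = pCons 1 (geom_poly d)"

lemma coeff_geom_poly: "coeff (geom_poly d) i = (if i < d then 1 else 0)"
  by (induction d arbitrary: i) (auto simp: coeff_pCons split: nat.splits)

lemma geom_poly_eq_0_iff [simp]: "geom_poly d = 0 \<longleftrightarrow> d = 0"
  by (cases d) simp_all

lemma degree_geom_poly: "degree (geom_poly d) = d - 1"
  by (induction d) (simp_all add: degree_pCons_eq_if)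

lemma reflect_geom_poly: "reflect_poly (geom_poly d) = geom_poly d"
  by (rule poly_eqI) (auto simp: coeff_reflect_poly degree_geom_poly coeff_geom_poly)

lemma poly_geom_poly: "poly (geom_poly d) x = (\<Sum>j<d. x ^ j)"
  by (induction d) (simp_all add: sum.lessThan_Suc_shift sum_distrib_left del: sum.lessThan_Suc
      flip: power_Suc)

lemma map_poly_geom_poly:
  "f 0 = 0 \<Longrightarrow> f 1 = 1 \<Longrightarrow> map_poly f (geom_poly d) = geom_poly d"
  by (induction d) (simp_all add: map_poly_pCons)

lemma coeff_mult_ge_1:
  fixes p q :: "'a::linordered_idom poly"
  assumes p: "\<forall>i\<le>degree p. 1 \<le> coeff p i" and q: "\<forall>i\<le>degree q. 1 \<le> coeff q i"
    and i: "i \<le> degree (p * q)"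
  shows "1 \<le> coeff (p * q) i"
proof -
  have nonneg: "0 \<le> coeff r j" if "\<forall>i\<le>degree r. 1 \<le> coeff r i" for r :: "'a poly" and j
    using that by (cases "j \<le> degree r") (auto simp: coeff_eq_0 intro: order.trans[OF zero_le_one])
  have "p \<noteq> 0" "q \<noteq> 0"
    using p q by (auto dest: spec[of _ 0])
  then have deg: "degree (p * q) = degree p + degree q"
    by (rule degree_mult_eq)
  define j where "j = min i (degree p)"
  have j: "j \<le> i" "j \<le> degree p" "i - j \<le> degree q"
    using i unfolding deg j_def by auto
  have "1 * 1 \<le> coeff p j * coeff q (i - j)"
    using p q j by (intro mult_mono) auto
  also have "\<dots> \<le> (\<Sum>l\<le>i. coeff p l * coeff q (i - l))"
    by (rule member_le_sum) (use j nonneg[OF p] nonneg[OF q] in auto)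
  finally show ?thesis
    by (simp add: coeff_mult)
qed

lemma degree_prod_geom_poly:
  "\<forall>d\<in>set ds. d > 0 \<Longrightarrow> degree (\<Prod>d\<leftarrow>ds. geom_poly d :: 'a::idom poly) = (\<Sum>d\<leftarrow>ds. d - 1)"
proof (induction ds)
  case (Cons d ds)
  then have "(\<Prod>d\<leftarrow>ds. geom_poly d :: 'a poly) \<noteq> 0" "d > 0"
    by (auto simp: prod_list_zero_iff)
  with Cons show ?case
    by (simp add: degree_mult_eq degree_geom_poly)
qed simp

lemma coeff_prod_geom_poly_ge_1:
  fixes i :: nat
  assumes "\<forall>d\<in>set ds. d > 0" and "i \<le> degree (\<Prod>d\<leftarrow>ds. geom_poly d :: 'a::linordered_idom poly)"
  shows "1 \<le> coeff (\<Prod>d\<leftarrow>ds. geom_poly d :: 'a poly) i"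
  using assms
proof (induction ds arbitrary: i)
  case Nil
  then show ?case by simp
next
  case (Cons d ds)
  have "\<forall>i\<le>degree (geom_poly d :: 'a poly). 1 \<le> coeff (geom_poly d :: 'a poly) i"
    using Cons.prems by (auto simp: degree_geom_poly coeff_geom_poly)
  with Cons show ?case
    by (auto intro: coeff_mult_ge_1)
qed

lemma coeff_0_prod_geom_poly:
  "\<forall>d\<in>set ds. d > 0 \<Longrightarrow> coeff (\<Prod>d\<leftarrow>ds. geom_poly d) 0 = 1"
  by (induction ds) (auto simp: coeff_mult_0 coeff_geom_poly)

lemma coeff_prod_geom_poly_symmetric:
  fixes ds :: "nat list"
  defines "P \<equiv> \<Prod>d\<leftarrow>ds. geom_poly d :: 'a::idom poly"
  assumes "i \<le> degree P"
  shows "coeff P i = coeff P (degree P - i)"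
proof -
  have "reflect_poly P = P"
    by (simp add: P_def reflect_poly_prod_list comp_def reflect_geom_poly)
  then have "coeff P i = coeff (reflect_poly P) i"
    by simp
  also have "\<dots> = coeff P (degree P - i)"
    using assms by (simp add: coeff_reflect_poly)
  finally show ?thesis .
qed

section \<open>The \<open>A\<^sub>k\<close>-genus as a sum of binomial coefficients\<close>

lemma prod_list_map_mult: "(\<Prod>x\<leftarrow>xs. f x * g x) = (\<Prod>x\<leftarrow>xs. f x) * (\<Prod>x\<leftarrow>xs. g x)"
  for f g :: "'a \<Rightarrow> 'b::comm_monoid_mult"
  by (induction xs) (simp_all add: mult_ac)

lemma prod_list_fps_exp: "(\<Prod>x\<leftarrow>xs. fps_exp (f x)) = fps_exp (\<Sum>x\<leftarrow>xs. f x)"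
  for f :: "'a \<Rightarrow> 'b::field_char_0"
  by (induction xs) (simp_all add: fps_exp_add_mult)

lemma fps_const_sum: "fps_const (sum f A) = (\<Sum>a\<in>A. fps_const (f a))"
  by (induction A rule: infinite_finite_induct) (simp_all flip: fps_const_add)

lemma map_poly_fps_const_mult:
  "map_poly fps_const (p * q) = map_poly fps_const p * map_poly fps_const q"
  by (rule poly_eqI) (simp add: coeff_map_poly coeff_mult fps_const_sum)

lemma poly_map_poly_fps_const_prod_list:
  "poly (map_poly fps_const (prod_list ps)) x = (\<Prod>p\<leftarrow>ps. poly (map_poly fps_const p) x)"
  by (induction ps) (simp_all add: map_poly_fps_const_mult)

lemma poly_map_poly_fps_const:
  "poly (map_poly fps_const p) x = (\<Sum>i\<le>degree p. fps_const (coeff p i) * x ^ i)"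
  by (simp add: poly_altdef degree_map_poly coeff_map_poly)

lemma Ak_Qinv_eq:
  "Ak_Qinv k (real d) = fps_const (1 / (real k * real d)) * fps_expm1_quot (real k)
     * poly (geom_poly d) (fps_exp (real k)) * fps_exp (- real d)"
proof -
  have "fps_exp (real k * real d) - 1 = fps_exp (real k) ^ d - 1"
    by (simp add: fps_exp_power_mult mult.commute)
  also have "\<dots> = (fps_exp (real k) - 1) * poly (geom_poly d) (fps_exp (real k))"
    by (simp add: poly_geom_poly power_diff_1_eq)
  also have "\<dots> = fps_expm1_quot (real k) * poly (geom_poly d) (fps_exp (real k)) * fps_X"
    by (simp add: fps_exp_eq_1_plus_X_times_expm1_quot[of "real k"] mult_ac)
  finally have "fps_shift 1 (fps_exp (real k * real d) - 1)
      = fps_expm1_quot (real k) * poly (geom_poly d) (fps_exp (real k))"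
    by (simp only: fps_shift_times_fps_X')
  then show ?thesis
    unfolding Ak_Qinv_def by (simp only: mult.assoc)
qed

lemma Ak_Q_eq:
  assumes "k > 0"
  shows "Ak_Q k = fps_const (real k) * fps_exp 1 * inverse (fps_expm1_quot (real k))"
proof -
  have "Ak_Qinv k 1 = fps_const (1 / real k) * fps_exp (- 1) * fps_expm1_quot (real k)"
    using Ak_Qinv_eq[of k 1] by (simp add: mult_ac)
  then show ?thesis
    using assms by (simp add: Ak_Q_def fps_inverse_mult fps_const_inverse fps_exp_neg)
qed

lemma Ak_Q_times_Ak_Qinv:
  assumes "k > 0"
  shows "fps_const (real d) * Ak_Q k * Ak_Qinv k (real d)
    = fps_exp (1 - real d) * poly (geom_poly d) (fps_exp (real k))"
proof (cases "d = 0")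
  case False
  have "fps_const (real d) * Ak_Q k * Ak_Qinv k (real d)
      = fps_const (real d) * fps_const (real k) * fps_const (1 / (real k * real d))
        * (fps_exp 1 * fps_exp (- real d))
        * (fps_expm1_quot (real k) * inverse (fps_expm1_quot (real k)))
        * poly (geom_poly d) (fps_exp (real k))"
    unfolding Ak_Q_eq[OF assms] Ak_Qinv_eq by (simp only: mult_ac)
  also have "\<dots> = fps_exp (1 - real d) * poly (geom_poly d) (fps_exp (real k))"
    using assms False
    by (simp add: fps_expm1_quot_times_inverse flip: fps_exp_add_mult)
  finally show ?thesis .
qed (simp add: Ak_Qinv_def)

lemma Ak_Q_power_times_prod_Ak_Qinv:
  assumes "k > 0"
  shows "fps_const (\<Prod>d\<leftarrow>ds. real d) * (Ak_Q k ^ (n + length ds + 1) * (\<Prod>d\<leftarrow>ds. Ak_Qinv k (real d)))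
    = Ak_Q k ^ (n + 1) * fps_exp (\<Sum>d\<leftarrow>ds. 1 - real d)
      * (\<Prod>d\<leftarrow>ds. poly (geom_poly d) (fps_exp (real k)))"
proof -
  have "(\<Prod>d\<leftarrow>ds. fps_const (real d) * Ak_Q k * Ak_Qinv k (real d))
      = fps_const (\<Prod>d\<leftarrow>ds. real d) * Ak_Q k ^ length ds * (\<Prod>d\<leftarrow>ds. Ak_Qinv k (real d))"
    by (induction ds) (simp_all add: mult_ac)
  then have "fps_const (\<Prod>d\<leftarrow>ds. real d) * (Ak_Q k ^ (n + length ds + 1) * (\<Prod>d\<leftarrow>ds. Ak_Qinv k (real d)))
      = Ak_Q k ^ (n + 1) * (\<Prod>d\<leftarrow>ds. fps_const (real d) * Ak_Q k * Ak_Qinv k (real d))"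
    by (simp add: power_add mult_ac)
  also have "\<dots> = Ak_Q k ^ (n + 1) * fps_exp (\<Sum>d\<leftarrow>ds. 1 - real d)
      * (\<Prod>d\<leftarrow>ds. poly (geom_poly d) (fps_exp (real k)))"
    unfolding Ak_Q_times_Ak_Qinv[OF assms]
    by (simp add: prod_list_map_mult prod_list_fps_exp mult.assoc)
  finally show ?thesis .
qed

lemma Ak_genus_CI_eq:
  assumes "k > 0"
  shows "Ak_genus_CI k n ds = real k ^ (n + 1) *
    (inverse (fps_expm1_quot (real k)) ^ (n + 1) * fps_exp (of_int (c1_CI n ds))
      * poly (map_poly fps_const (\<Prod>d\<leftarrow>ds. geom_poly d)) (fps_exp (real k))) $ n"
proof -
  have Q: "Ak_Q k ^ (n + 1) = fps_const (real k ^ (n + 1)) * fps_exp (real (n + 1))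
      * inverse (fps_expm1_quot (real k)) ^ (n + 1)"
    by (simp only: Ak_Q_eq[OF assms] power_mult_distrib fps_exp_power_mult fps_const_power
        mult_1_left mult_1_right mult_ac)
  have G: "(\<Prod>d\<leftarrow>ds. poly (geom_poly d) (fps_exp (real k)))
      = poly (map_poly fps_const (\<Prod>d\<leftarrow>ds. geom_poly d)) (fps_exp (real k))"
    by (simp add: poly_map_poly_fps_const_prod_list map_poly_geom_poly o_def)
  have exp: "fps_exp (of_int (c1_CI n ds)) = fps_exp (real (n + 1)) * fps_exp (\<Sum>d\<leftarrow>ds. 1 - real d)"
    by (induction ds) (simp_all add: c1_CI_def flip: fps_exp_add_mult)
  have "Ak_genus_CI k n ds = (fps_const (\<Prod>d\<leftarrow>ds. real d)
      * (Ak_Q k ^ (n + length ds + 1) * (\<Prod>d\<leftarrow>ds. Ak_Qinv k (real d)))) $ n"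
    by (simp add: Ak_genus_CI_def)
  also have "\<dots> = (fps_const (real k ^ (n + 1)) *
      (inverse (fps_expm1_quot (real k)) ^ (n + 1) * fps_exp (of_int (c1_CI n ds))
        * poly (map_poly fps_const (\<Prod>d\<leftarrow>ds. geom_poly d)) (fps_exp (real k)))) $ n"
    unfolding Ak_Q_power_times_prod_Ak_Qinv[OF assms] Q G exp by (simp only: mult_ac)
  finally show ?thesis
    by simp
qed

lemma Ak_genus_CI_eq_sum_gchoose:
  fixes m :: int and ds :: "nat list"
  defines "P \<equiv> \<Prod>d\<leftarrow>ds. geom_poly d :: real poly"
  assumes "k > 0" and "c1_CI n ds = int k * m"
  shows "Ak_genus_CI k n ds = real k ^ n * (\<Sum>i\<le>degree P. coeff P i * (of_int (m + int i - 1) gchoose n))"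
proof -
  define A where "A = inverse (fps_expm1_quot (real k)) ^ (n + 1) * fps_exp (of_int (c1_CI n ds))"
  have residue: "real k * (A * fps_exp (real k) ^ i) $ n = of_int (m + int i - 1) gchoose n" for i
  proof -
    have "fps_exp (of_int (c1_CI n ds)) * fps_exp (real k) ^ i = fps_exp (real k * of_int (m + int i))"
      by (simp add: assms(3) fps_exp_power_mult algebra_simps flip: fps_exp_add_mult)
    then have "real k * (A * fps_exp (real k) ^ i) $ n = exp_residue (real k) n (m + int i)"
      by (simp add: A_def exp_residue_def mult.assoc)
    then show ?thesis
      using assms(2) by (simp add: exp_residue_eq_gchoose)
  qed
  have "Ak_genus_CI k n ds = real k ^ n * (real k * (A * (\<Sum>i\<le>degree P. fps_const (coeff P i) * fps_exp (real k) ^ i)) $ n)"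
    by (simp add: Ak_genus_CI_eq[OF assms(2)] A_def P_def poly_map_poly_fps_const)
  also have "\<dots> = real k ^ n * (\<Sum>i\<le>degree P. coeff P i * (real k * (A * fps_exp (real k) ^ i) $ n))"
    by (simp add: sum_distrib_left fps_sum_nth mult.left_commute[of A] mult.left_commute[of "real k"])
  finally show ?thesis
    by (simp add: residue)
qed

section \<open>Weighted sums of binomial coefficients\<close>

lemma of_int_gchoose_eq_0: "0 \<le> x \<Longrightarrow> x < int n \<Longrightarrow> (of_int x gchoose n :: 'a::field_char_0) = 0"
proof -
  assume "0 \<le> x" "x < int n"
  then obtain t where "x = int t" "t < n"
    by (metis nonneg_int_cases of_nat_less_iff)
  then show ?thesis
    by (simp flip: binomial_gbinomial)
qed

lemma sum_atMost_choose_diff: "(\<Sum>i\<le>J. (n + J - i) choose n) = (n + J + 1) choose (n + 1)"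
proof -
  have "(\<Sum>i\<le>J. (n + J - i) choose n) = (\<Sum>i\<le>J. (n + i) choose n)"
    using sum.atLeastAtMost_rev[of "\<lambda>i. (n + J - i) choose n" 0 J]
    by (simp add: atLeast0AtMost)
  then show ?thesis
    by (simp add: choose_rising_sum(1))
qed

lemma sum_times_gchoose_eq_0_if_positive:
  fixes m :: int
  assumes "k \<ge> 2" and "m > 0" and "int D = int n + 1 - int k * m"
  shows "(\<Sum>i\<le>D. p i * (of_int (m + int i - 1) gchoose n)) = (0 :: 'a::field_char_0)"
proof (intro sum.neutral ballI)
  fix i assume "i \<in> {..D}"
  then have "int i \<le> int D"
    by simp
  moreover have "2 * m \<le> int k * m"
    using assms by (intro mult_right_mono) auto
  ultimately have "0 \<le> m + int i - 1" "m + int i - 1 < int n"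
    using assms(2,3) by linarith+
  then have "(of_int (m + int i - 1) gchoose n :: 'a) = 0"
    by (rule of_int_gchoose_eq_0)
  then show "p i * (of_int (m + int i - 1) gchoose n) = 0"
    by simp
qed

lemma sum_times_gchoose_minus_1:
  "(\<Sum>i\<le>n + 1. p i * (of_int (int i - 1) gchoose n)) = (-1) ^ n * p 0 + (p (n + 1) :: 'a::field_char_0)"
proof -
  define f where "f i = p i * (of_int (int i - 1) gchoose n)" for i
  have "(\<Sum>i\<le>Suc n. f i) = f 0 + (\<Sum>i<n. f (Suc i)) + f (Suc n)"
    unfolding sum.atMost_Suc_shift by (simp only: lessThan_Suc_atMost[symmetric] sum.lessThan_Suc add.assoc)
  moreover have "f (Suc i) = 0" if "i < n" for i
    using that by (simp add: f_def flip: binomial_gbinomial)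
  moreover have "f 0 = (-1) ^ n * p 0"
    using gbinomial_minus[of "1 :: 'a" n] by (simp add: f_def flip: binomial_gbinomial)
  moreover have "f (Suc n) = p (Suc n)"
    by (simp add: f_def flip: binomial_gbinomial)
  ultimately have "(\<Sum>i\<le>Suc n. f i) = (-1) ^ n * p 0 + p (Suc n)"
    by simp
  then show ?thesis
    by (simp only: f_def Suc_eq_plus1)
qed

definition choose_convolution :: "(nat \<Rightarrow> 'a::comm_semiring_1) \<Rightarrow> nat \<Rightarrow> nat \<Rightarrow> 'a" where
  "choose_convolution p n J = (\<Sum>i\<le>J. p i * of_nat ((n + J - i) choose n))"

lemma choose_convolution_ge:
  fixes p :: "nat \<Rightarrow> 'a::linordered_semidom"
  assumes "\<forall>i\<le>J. 1 \<le> p i"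
  shows "of_nat ((n + J + 1) choose (n + 1)) \<le> choose_convolution p n J"
proof -
  have "of_nat ((n + J + 1) choose (n + 1)) = (\<Sum>i\<le>J. (1 :: 'a) * of_nat ((n + J - i) choose n))"
    by (simp only: sum_atMost_choose_diff[symmetric] of_nat_sum mult_1)
  also have "\<dots> \<le> choose_convolution p n J"
    unfolding choose_convolution_def using assms by (intro sum_mono mult_right_mono) auto
  finally show ?thesis .
qed

lemma choose_convolution_excess_mono:
  fixes p :: "nat \<Rightarrow> 'a::linordered_idom"
  assumes "\<forall>i\<le>J'. 1 \<le> p i" and "J \<le> J'"
  shows "choose_convolution p n J - of_nat ((n + J + 1) choose (n + 1))
    \<le> choose_convolution p n J' - of_nat ((n + J' + 1) choose (n + 1))"
proof -
  have excess: "choose_convolution p n L - of_nat ((n + L + 1) choose (n + 1))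
      = (\<Sum>i\<le>L. (p i - 1) * of_nat ((n + L - i) choose n))" for L
    by (simp only: choose_convolution_def sum_atMost_choose_diff[symmetric] of_nat_sum left_diff_distrib
        mult_1 sum_subtractf)
  have "(\<Sum>i\<le>J. (p i - 1) * of_nat ((n + J - i) choose n))
      \<le> (\<Sum>i\<le>J. (p i - 1) * of_nat ((n + J' - i) choose n))"
    using assms by (intro sum_mono mult_left_mono) (auto intro: binomial_right_mono)
  also have "\<dots> \<le> (\<Sum>i\<le>J'. (p i - 1) * of_nat ((n + J' - i) choose n))"
    using assms by (intro sum_mono2) auto
  finally show ?thesis
    unfolding excess .
qed

lemma sum_atMost_times_gchoose_negative:
  fixes p :: "nat \<Rightarrow> 'a::field_char_0"
  shows "(\<Sum>i\<le>M. p i * (of_int (int i - int M - 1) gchoose n)) = (-1) ^ n * choose_convolution p n M"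
  unfolding choose_convolution_def sum_distrib_left
proof (intro sum.cong refl)
  fix i assume "i \<in> {..M}"
  then have "(of_int (int i - int M - 1) :: 'a) = - of_nat (M + 1 - i)"
    "of_nat (M + 1 - i) + of_nat n - 1 = (of_nat (n + M - i) :: 'a)"
    by (auto simp: of_nat_diff)
  then show "p i * (of_int (int i - int M - 1) gchoose n) = (-1) ^ n * (p i * of_nat ((n + M - i) choose n))"
    by (simp add: gbinomial_minus binomial_gbinomial)
qed

lemma sum_times_gchoose_negative_shift:
  fixes p :: "nat \<Rightarrow> 'a::field_char_0"
  assumes D: "D = M + n + 1 + K" and sym: "\<forall>i\<le>D. p i = p (D - i)"
  shows "(\<Sum>i\<le>D. p i * (of_int (int i - int M - 1) gchoose n))
    = (-1) ^ n * choose_convolution p n M + choose_convolution p n K"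
proof -
  define t where "t i = p i * (of_int (int i - int M - 1) gchoose n)" for i
  have "(\<Sum>i\<le>D. t i) = (\<Sum>i\<le>M. t i) + (\<Sum>i\<in>{M + 1..M + n}. t i) + (\<Sum>i\<in>{M + n + 1..D}. t i)"
  proof -
    have "{..D} = ({..M} \<union> {M + 1..M + n}) \<union> {M + n + 1..D}"
      using D by auto
    then have "(\<Sum>i\<le>D. t i) = (\<Sum>i\<in>{..M} \<union> {M + 1..M + n}. t i) + (\<Sum>i\<in>{M + n + 1..D}. t i)"
      by (simp only:) (rule sum.union_disjoint; auto)
    also have "(\<Sum>i\<in>{..M} \<union> {M + 1..M + n}. t i) = (\<Sum>i\<le>M. t i) + (\<Sum>i\<in>{M + 1..M + n}. t i)"
      by (rule sum.union_disjoint) auto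
    finally show ?thesis .
  qed
  moreover have "(\<Sum>i\<le>M. t i) = (-1) ^ n * choose_convolution p n M"
    unfolding t_def by (rule sum_atMost_times_gchoose_negative)
  moreover have "(\<Sum>i\<in>{M + 1..M + n}. t i) = 0"
  proof (intro sum.neutral ballI)
    fix i assume i: "i \<in> {M + 1..M + n}"
    have "(of_int (int i - int M - 1) gchoose n :: 'a) = 0"
      by (rule of_int_gchoose_eq_0) (use i in auto)
    then show "t i = 0"
      by (simp add: t_def)
  qed
  moreover have "(\<Sum>i\<in>{M + n + 1..D}. t i) = choose_convolution p n K"
    unfolding choose_convolution_def
  proof (rule sum.reindex_bij_witness[where i = "\<lambda>l. D - l" and j = "\<lambda>i. D - i"])
    fix i assume i: "i \<in> {M + n + 1..D}"
    then have "p i = p (D - i)" "int i - int M - 1 = int (n + K - (D - i))"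
      using D sym[rule_format, of i] by auto
    then show "p (D - i) * of_nat ((n + K - (D - i)) choose n) = t i"
      by (simp add: t_def binomial_gbinomial)
  qed (use D in auto)
  ultimately show ?thesis
    unfolding t_def by simp
qed

lemma sum_times_gchoose_negative_shift_ge:
  fixes p :: "nat \<Rightarrow> 'a::linordered_field"
  assumes D: "D = M + n + 1 + K" and "M \<le> K"
    and ge: "\<forall>i\<le>D. 1 \<le> p i" and sym: "\<forall>i\<le>D. p i = p (D - i)"
  shows "of_nat ((n + K + 1) choose (n + 1)) + (-1) ^ n * of_nat ((n + M + 1) choose (n + 1))
    \<le> (\<Sum>i\<le>D. p i * (of_int (int i - int M - 1) gchoose n))"
proof -
  have ge_K: "\<forall>i\<le>K. 1 \<le> p i" and ge_M: "\<forall>i\<le>M. 1 \<le> p i"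
    using ge D \<open>M \<le> K\<close> by auto
  have "of_nat ((n + K + 1) choose (n + 1)) + (-1) ^ n * of_nat ((n + M + 1) choose (n + 1))
      \<le> (-1) ^ n * choose_convolution p n M + choose_convolution p n K"
  proof (cases "even n")
    case True
    then show ?thesis
      using choose_convolution_ge[OF ge_K, of n] choose_convolution_ge[OF ge_M, of n] by simp
  next
    case False
    then show ?thesis
      using choose_convolution_excess_mono[OF ge_K \<open>M \<le> K\<close>, of n] by simp
  qed
  also have "\<dots> = (\<Sum>i\<le>D. p i * (of_int (int i - int M - 1) gchoose n))"
    using sum_times_gchoose_negative_shift[OF D sym] ..
  finally show ?thesis .
qed

lemma c1_CI_eq_degree:
  "\<forall>d\<in>set ds. d > 0 \<Longrightarrow> c1_CI n ds = int n + 1 - int (\<Sum>d\<leftarrow>ds. d - 1)"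
  by (induction ds) (auto simp: c1_CI_def of_nat_diff)

lemma Ak_genus_CI_palindromic_sum:
  fixes m :: int
  assumes "k > 0" and pos: "\<forall>d\<in>set ds. d > 0" and m: "c1_CI n ds = int k * m"
  obtains p :: "nat \<Rightarrow> real" and D :: nat
  where "Ak_genus_CI k n ds = real k ^ n * (\<Sum>i\<le>D. p i * (of_int (m + int i - 1) gchoose n))"
    and "int D = int n + 1 - int k * m"
    and "\<forall>i\<le>D. 1 \<le> p i" and "\<forall>i\<le>D. p i = p (D - i)" and "p 0 = 1"
proof
  define P where "P = (\<Prod>d\<leftarrow>ds. geom_poly d :: real poly)"
  show "Ak_genus_CI k n ds = real k ^ n * (\<Sum>i\<le>degree P. coeff P i * (of_int (m + int i - 1) gchoose n))"
    unfolding P_def by (rule Ak_genus_CI_eq_sum_gchoose[OF assms(1) m])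
  show "int (degree P) = int n + 1 - int k * m"
    using c1_CI_eq_degree[OF pos, of n] degree_prod_geom_poly[OF pos] m by (simp add: P_def)
  show "\<forall>i\<le>degree P. 1 \<le> coeff P i"
    unfolding P_def by (intro allI impI coeff_prod_geom_poly_ge_1[OF pos])
  show "\<forall>i\<le>degree P. coeff P i = coeff P (degree P - i)"
    unfolding P_def by (intro allI impI coeff_prod_geom_poly_symmetric)
  show "coeff P 0 = 1"
    unfolding P_def by (rule coeff_0_prod_geom_poly[OF pos])
qed

lemma sum_times_gchoose_ge_if_negative:
  fixes p :: "nat \<Rightarrow> real" and m :: int
  assumes "k \<ge> 2" and "m < 0" and D_m: "int D = int n + 1 - int k * m"
    and ge: "\<forall>i\<le>D. 1 \<le> p i" and sym: "\<forall>i\<le>D. p i = p (D - i)"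
  shows "((real (n + 1) - (real k - 1) * of_int m) gchoose (n + 1))
      + (-1) ^ n * ((real (n + 1) - of_int m) gchoose (n + 1))
    \<le> (\<Sum>i\<le>D. p i * (of_int (m + int i - 1) gchoose n))"
proof -
  define M K where "M = nat (- m)" and "K = (k - 1) * M"
  have m: "m = - int M"
    using \<open>m < 0\<close> by (simp add: M_def)
  have "1 \<le> k - 1"
    using assms(1) by simp
  then have "M \<le> K"
    using mult_le_mono1[of 1 "k - 1" M] by (simp add: K_def)
  have "int M + int K = int k * int M"
    using assms(1) by (cases k) (simp_all add: K_def algebra_simps)
  then have "D = M + n + 1 + K"
    using D_m m by simp
  have "real K = (real k - 1) * real M"
    using assms(1) by (simp add: K_def of_nat_diff)
  then have "real (n + 1) - (real k - 1) * of_int m = of_nat (n + K + 1)"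
    and "real (n + 1) - of_int m = of_nat (n + M + 1)"
    by (simp_all add: m algebra_simps)
  then have "((real (n + 1) - (real k - 1) * of_int m) gchoose (n + 1))
      + (-1) ^ n * ((real (n + 1) - of_int m) gchoose (n + 1))
      = real ((n + K + 1) choose (n + 1)) + (-1) ^ n * real ((n + M + 1) choose (n + 1))"
    by (simp only: binomial_gbinomial)
  also have "\<dots> \<le> (\<Sum>i\<le>D. p i * (of_int (int i - int M - 1) gchoose n))"
    by (rule sum_times_gchoose_negative_shift_ge[OF \<open>D = M + n + 1 + K\<close> \<open>M \<le> K\<close> ge sym])
  also have "\<dots> = (\<Sum>i\<le>D. p i * (of_int (m + int i - 1) gchoose n))"
    by (simp add: m algebra_simps)
  finally show ?thesis .
qed

theorem theorem1p3:
  fixes n k :: nat and ds :: "nat list"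
  assumes "length ds \<ge> 1"
    and "\<forall>d\<in>set ds. d > 1"
    and "k \<ge> 2"
    and "int k dvd c1_CI n ds"
  shows "(c1_CI n ds > 0 \<longrightarrow> Ak_genus_CI k n ds = 0)
       \<and> (c1_CI n ds = 0 \<longrightarrow> Ak_genus_CI k n ds = real k ^ n * (1 + (-1) ^ n))
       \<and> (c1_CI n ds < 0 \<longrightarrow>
            Ak_genus_CI k n ds \<ge> real k ^ n *
              (((real (n + 1) - (real k - 1) / real k * of_int (c1_CI n ds)) gchoose (n + 1))
               + (-1) ^ n * ((real (n + 1) - of_int (c1_CI n ds) / real k) gchoose (n + 1))))"
proof -
  have "k > 0" and pos: "\<forall>d\<in>set ds. d > 0"
    using assms(2,3) by auto
  obtain m where m: "c1_CI n ds = int k * m"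
    using assms(4) by (auto elim: dvdE)
  obtain p D where genus: "Ak_genus_CI k n ds = real k ^ n * (\<Sum>i\<le>D. p i * (of_int (m + int i - 1) gchoose n))"
    and D_m: "int D = int n + 1 - int k * m" and ge: "\<forall>i\<le>D. 1 \<le> p i"
    and sym: "\<forall>i\<le>D. p i = p (D - i)" and "p 0 = 1"
    by (rule Ak_genus_CI_palindromic_sum[OF \<open>k > 0\<close> pos m])
  have "Ak_genus_CI k n ds = 0" if "m > 0"
    unfolding genus sum_times_gchoose_eq_0_if_positive[OF assms(3) that D_m] by simp
  moreover have "Ak_genus_CI k n ds = real k ^ n * (1 + (-1) ^ n)" if "m = 0"
  proof -
    have "D = n + 1"
      using D_m that by simp
    then show ?thesis
      using sum_times_gchoose_minus_1[of p n] sym[rule_format, of D] \<open>p 0 = 1\<close>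
      by (simp add: genus that)
  qed
  moreover have "real k ^ n * (((real (n + 1) - (real k - 1) * of_int m) gchoose (n + 1))
      + (-1) ^ n * ((real (n + 1) - of_int m) gchoose (n + 1))) \<le> Ak_genus_CI k n ds" if "m < 0"
    unfolding genus using sum_times_gchoose_ge_if_negative[OF assms(3) that D_m ge sym]
    by (rule mult_left_mono) simp
  ultimately show ?thesis
    using \<open>k > 0\<close> by (simp add: m zero_less_mult_iff mult_less_0_iff)
qed

end
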